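(* Let $\ell\ge 1$ and $0\le m\le\ell$ be integers, and let all objects be as defined in the context. Let $\hat{\mathcal{M}}_{\ell,m}$ denote the restriction of $\hat{\mathcal{M}}_\ell$ to $\mathcal{V}_{\ell,m}$ (viewed as an operator on $\mathcal{V}_{\ell,m}$). Then for every integer $d\ge 1$, $$\dim\ker(\hat{\mathcal{M}}_{\ell,m})^d-\dim\ker(\hat{\mathcal{M}}_{\ell,m})^{d-1}=\dim\mathcal{V}_{\ell,m}^{\left\lfloor\frac{m(\ell-m)-(d-1)}{2}\right\rfloor},$$ where $(\hat{\mathcal{M}}_{\ell,m})^0$ is the identity.
   Context: Let $\mathcal{F}$ be a complex vector space carrying linear operators $\hat b_1,\dots,\hat b_\ell,\hat b_1',\dots,\hat b_\ell'$ satisfying $\{\hat b_j,\hat b_k\}=\{\hat b_j',\hat b_k'\}=0$ and $\{\hat b_j,\hat b_k'\}=\delta_{jk}$ (with $\{A,B\}=AB+BA$), together with a vector $|\mathrm{right}\rangle$ with $\hat b_k|\mathrm{right}\rangle=0$ for all $k$, such that the $2^\ell$ vectors $(\hat b_1')^{\nu_1}\cdots(\hat b_\ell')^{\nu_\ell}|\mathrm{right}\rangle$, $\nu_k\in\{0,1\}$, form a basis of $\mathcal{F}$. Define $\hat{\mathcal{M}}_\ell=\sum_{k=1}^{\ell-1}\hat b_{k+1}'\hat b_k$, $\hat{\mathcal{N}}_\ell=\sum_{k=1}^\ell \hat b_k'\hat b_k$, $\hat\Omega_\ell=\sum_{k=1}^\ell k\,\hat b_k'\hat b_k-\tfrac12\hat{\mathcal{N}}_\ell(\hat{\mathcal{N}}_\ell+1)$,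 $\mathcal{V}_{\ell,m}=\{\psi:\hat{\mathcal{N}}_\ell\psi=m\psi\}$, and for any integer $r$, $\mathcal{V}_{\ell,m}^r=\{\psi:\hat{\mathcal{N}}_\ell\psi=m\psi,\ \hat\Omega_\ell\psi=r\psi\}$ (which is $\{0\}$ unless $0\le r\le m(\ell-m)$). *)

theory Defs
  imports Complex_Main
begin

text \<open>The abstract space F is a type 'v with addition (ab_group_add) and a complex scalar
multiplication sm, required to form a complex vector space (locale vector_space).\<close>

definition anticomm :: "('v::ab_group_add \<Rightarrow> 'v) \<Rightarrow> ('v \<Rightarrow> 'v) \<Rightarrow> 'v \<Rightarrow> 'v" where
  "anticomm A B = (\<lambda>x. A (B x) + B (A x))"

fun creation_word :: "(nat \<Rightarrow> 'v \<Rightarrow> 'v) \<Rightarrow> (nat \<Rightarrow> bool) \<Rightarrow> nat \<Rightarrow> 'v \<Rightarrow> 'v" where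
  "creation_word b' nu 0 = id"
| "creation_word b' nu (Suc n) = creation_word b' nu n \<circ> (if nu (Suc n) then b' (Suc n) else id)"

text \<open>Occupation patterns nu: {1..l} \<rightarrow> {0,1} encoded as nat \<Rightarrow> bool supported in {1..l}.\<close>
definition occ_patterns :: "nat \<Rightarrow> (nat \<Rightarrow> bool) set" where
  "occ_patterns l = {nu. \<forall>k. nu k \<longrightarrow> k \<in> {1..l}}"

definition fermion_system ::
  "(complex \<Rightarrow> 'v::ab_group_add \<Rightarrow> 'v) \<Rightarrow> nat \<Rightarrow> (nat \<Rightarrow> 'v \<Rightarrow> 'v) \<Rightarrow> (nat \<Rightarrow> 'v \<Rightarrow> 'v) \<Rightarrow> 'v \<Rightarrow> bool" where
  "fermion_system sm l b b' right \<longleftrightarrow>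
     vector_space sm
   \<and> (\<forall>k\<in>{1..l}. Vector_Spaces.linear sm sm (b k) \<and> Vector_Spaces.linear sm sm (b' k))
   \<and> (\<forall>j\<in>{1..l}. \<forall>k\<in>{1..l}. anticomm (b j) (b k) = (\<lambda>_. 0) \<and> anticomm (b' j) (b' k) = (\<lambda>_. 0)
         \<and> anticomm (b j) (b' k) = (\<lambda>x. if j = k then x else 0))
   \<and> (\<forall>k\<in>{1..l}. b k right = 0)
   \<and> inj_on (\<lambda>nu. creation_word b' nu l right) (occ_patterns l)
   \<and> \<not> module.dependent sm ((\<lambda>nu. creation_word b' nu l right) ` occ_patterns l)
   \<and> module.span sm ((\<lambda>nu. creation_word b' nu l right) ` occ_patterns l) = UNIV"

definition numop :: "nat \<Rightarrow> (nat \<Rightarrow> 'v \<Rightarrow> 'v) \<Rightarrow> (nat \<Rightarrow> 'v \<Rightarrow> 'v) \<Rightarrow> 'v::ab_group_add \<Rightarrow> 'v" where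
  "numop l b b' = (\<lambda>x. \<Sum>k=1..l. b' k (b k x))"

definition Mop :: "nat \<Rightarrow> (nat \<Rightarrow> 'v \<Rightarrow> 'v) \<Rightarrow> (nat \<Rightarrow> 'v \<Rightarrow> 'v) \<Rightarrow> 'v::ab_group_add \<Rightarrow> 'v" where
  "Mop l b b' = (\<lambda>x. \<Sum>k=1..l-1. b' (k+1) (b k x))"

definition Omegaop :: "(complex \<Rightarrow> 'v \<Rightarrow> 'v) \<Rightarrow> nat \<Rightarrow> (nat \<Rightarrow> 'v \<Rightarrow> 'v) \<Rightarrow> (nat \<Rightarrow> 'v \<Rightarrow> 'v) \<Rightarrow> 'v::ab_group_add \<Rightarrow> 'v" where
  "Omegaop sm l b b' = (\<lambda>x. (\<Sum>k=1..l. sm (of_nat k) (b' k (b k x)))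
      - sm (1/2) (numop l b b' (numop l b b' x) + numop l b b' x))"

definition Vsp :: "(complex \<Rightarrow> 'v \<Rightarrow> 'v) \<Rightarrow> nat \<Rightarrow> (nat \<Rightarrow> 'v \<Rightarrow> 'v) \<Rightarrow> (nat \<Rightarrow> 'v \<Rightarrow> 'v) \<Rightarrow> nat \<Rightarrow> 'v::ab_group_add set" where
  "Vsp sm l b b' m = {x. numop l b b' x = sm (of_nat m) x}"

definition Vsp_r :: "(complex \<Rightarrow> 'v \<Rightarrow> 'v) \<Rightarrow> nat \<Rightarrow> (nat \<Rightarrow> 'v \<Rightarrow> 'v) \<Rightarrow> (nat \<Rightarrow> 'v \<Rightarrow> 'v) \<Rightarrow> nat \<Rightarrow> int \<Rightarrow> 'v::ab_group_add set" where
  "Vsp_r sm l b b' m r = {x. numop l b b' x = sm (of_nat m) x \<and> Omegaop sm l b b' x = sm (of_int r) x}"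

text \<open>Restriction of an operator f to a subspace V, as a map V \<rightarrow> V (extended by 0 off V).\<close>
definition restr_op :: "'v set \<Rightarrow> ('v \<Rightarrow> 'v) \<Rightarrow> 'v \<Rightarrow> 'v::zero" where
  "restr_op V f = (\<lambda>x. if x \<in> V then f x else 0)"

definition ker_pow :: "'v set \<Rightarrow> ('v \<Rightarrow> 'v) \<Rightarrow> nat \<Rightarrow> 'v::zero set" where
  "ker_pow V f d = {x \<in> V. (restr_op V f ^^ d) x = 0}"

end

(* The basis states are simultaneous eigenvectors of the number operator N and of Omega, and
   Omega takes the values 0, ..., K = m(l - m) on V_{l,m}; so V_{l,m} is the direct sum of the
   eigenspaces V^r = V_{l,m}^r.  M maps V^r into V^(r+1), and F = sum_k k(l - k) b'_k b_(k+1) maps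
   V^r into V^(r-1) with [M, F] = 2r - K on V^r, which makes V_{l,m} a weight module of sl2.
   The standard sl2 computation shows that M^k is injective on V^r when 2r + k <= K and maps V^r
   onto V^(r+k) otherwise; in particular dim V^r = dim V^(K-r).  Hence dim ker M^d is the sum of
   dim V^r over the window K - d < 2r <= K + d.  Going from d - 1 to d adds the weights with
   2r = K - d + 1 or 2r = K + d; exactly one of the two equations is solvable, and by the
   symmetry its weight contributes dim V^floor((K - d + 1)/2). *)

theory Submission
  imports Defs
begin

lemma sum_insert_fun_upd:
  assumes "finite I" "a \<notin> I"
  shows "(\<Sum>i\<in>insert a I. (u(a := z)) i) = z + sum u I"
proof -
  have "(\<Sum>i\<in>I. (u(a := z)) i) = sum u I" using assms(2) by (intro sum.cong) auto
  then show ?thesis using assms by simp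
qed

context vector_space
begin

lemma linear_funpow:
  assumes "Vector_Spaces.linear scale scale g"
  shows "Vector_Spaces.linear scale scale (g ^^ n)"
proof (induction n)
  case 0
  show ?case using linear_id by (simp add: id_def)
next
  case (Suc n)
  then show ?case using Vector_Spaces.linear_compose[OF Suc.IH assms] by (simp add: o_def)
qed

lemma subspace_eigenspace:
  assumes "Vector_Spaces.linear scale scale T"
  shows "subspace {x. T x = c *s x}"
proof -
  interpret T: Vector_Spaces.linear scale scale T by fact
  show ?thesis
    unfolding subspace_def by (simp add: T.add T.scale T.zero scale_right_distrib scale_left_commute)
qed

end

context finite_dimensional_vector_space
begin

lemma span_inter_span_Diff_eq_0:
  assumes C: "independent C" and BC: "B \<subseteq> C"
    and x: "x \<in> span B" "x \<in> span (C - B)"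
  shows "x = 0"
proof -
  have fC: "finite C" using C finiteI_independent by blast
  obtain u where u: "x = (\<Sum>v\<in>B. u v *s v)"
    using x(1) span_finite[OF finite_subset[OF BC fC]] by auto
  obtain w where w: "x = (\<Sum>v\<in>C - B. w v *s v)"
    using x(2) span_finite[of "C - B"] fC by auto
  define g where "g v = (if v \<in> B then u v else - w v)" for v
  have "(\<Sum>v\<in>C. g v *s v) = (\<Sum>v\<in>B. g v *s v) + (\<Sum>v\<in>C - B. g v *s v)"
    using sum.subset_diff[OF BC fC] by (simp add: add.commute)
  also have "\<dots> = x - x"
    using u w by (simp add: g_def sum_negf)
  finally have "\<forall>v\<in>C. g v = 0" using C independent_explicit by simp
  then have "\<forall>v\<in>B. u v = 0" using BC unfolding g_def by (metis subsetD)
  then show ?thesis using u by simp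
qed

lemma dim_kernel_add_dim_image:
  assumes lf: "Vector_Spaces.linear scale scale f" and S: "subspace S"
  shows "dim {x\<in>S. f x = 0} + dim (f ` S) = dim S"
proof -
  interpret lin: Vector_Spaces.linear scale scale f by fact
  interpret pair: finite_dimensional_vector_space_pair_1 scale Basis scale ..
  let ?K = "{x\<in>S. f x = 0}"
  obtain B where B: "B \<subseteq> ?K" "independent B" "?K \<subseteq> span B" "card B = dim ?K"
    using basis_exists by blast
  obtain C where C: "B \<subseteq> C" "C \<subseteq> S" "independent C" "S \<subseteq> span C"
    using maximal_independent_subset_extend[of B S] B(1,2) by blast
  have fC: "finite C" using C(3) finiteI_independent by blast
  have spanC: "span C = S" using C S span_subspace by blast
  have span_CB: "span (C - B) \<subseteq> S" using spanC span_mono[of "C - B" C] by auto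
  have img: "f ` S = f ` span (C - B)"
  proof
    show "f ` S \<subseteq> f ` span (C - B)"
    proof
      fix y assume "y \<in> f ` S"
      then obtain x where x: "x \<in> S" "y = f x" by auto
      then obtain u where u: "x = (\<Sum>v\<in>C. u v *s v)" using spanC span_finite[OF fC] by auto
      have "f (\<Sum>v\<in>B. u v *s v) = 0"
        using B(1) by (auto simp: lin.sum lin.scale intro!: sum.neutral)
      moreover have "x = (\<Sum>v\<in>B. u v *s v) + (\<Sum>v\<in>C - B. u v *s v)"
        using u sum.subset_diff[OF C(1) fC] by (simp add: add.commute)
      ultimately have "y = f (\<Sum>v\<in>C - B. u v *s v)" using x lin.add by simp
      moreover have "(\<Sum>v\<in>C - B. u v *s v) \<in> span (C - B)"
        by (intro span_sum span_scale span_base) auto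
      ultimately show "y \<in> f ` span (C - B)" by blast
    qed
  qed (use span_CB in blast)
  have "inj_on f (span (C - B))"
    unfolding lin.inj_on_iff_eq_0[OF subspace_span]
    using span_CB B(3) span_inter_span_Diff_eq_0[OF C(3) C(1)] by blast
  then have "dim (f ` S) = card (C - B)"
    using img pair.dim_image_eq[OF lf, of "span (C - B)"]
      dim_span_eq_card_independent[OF independent_mono[OF C(3)]] by (simp add: span_span)
  moreover have "card C = card B + card (C - B)"
    using card_Diff_subset[OF finite_subset[OF C(1) fC] C(1)] card_mono[OF fC C(1)] by simp
  ultimately show ?thesis using basis_card_eq_dim[OF C(2) C(4) C(3)] B(4) by simp
qed

lemma dim_image_eq_if_trivial_kernel:
  assumes "Vector_Spaces.linear scale scale T" "subspace S" "\<And>x. x \<in> S \<Longrightarrow> T x = 0 \<Longrightarrow> x = 0"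
  shows "dim (T ` S) = dim S"
proof -
  interpret T: Vector_Spaces.linear scale scale T by fact
  interpret pair: finite_dimensional_vector_space_pair_1 scale Basis scale ..
  have span: "span S = S" using assms(2) span_eq_iff by blast
  have "inj_on T (span S)" unfolding span using T.inj_on_iff_eq_0[OF assms(2)] assms(3) by blast
  then show ?thesis using pair.dim_image_eq[OF assms(1)] by blast
qed

definition family_sum :: "'i set \<Rightarrow> ('i \<Rightarrow> 'b set) \<Rightarrow> 'b set" where
  "family_sum I U = {(\<Sum>i\<in>I. u i) | u. \<forall>i\<in>I. u i \<in> U i}"

lemma family_sum_insert:
  assumes "finite I" "a \<notin> I"
  shows "family_sum (insert a I) U = {x + y |x y. x \<in> U a \<and> y \<in> family_sum I U}"
proof (intro set_eqI iffI)
  fix z assume "z \<in> family_sum (insert a I) U"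
  then obtain u where "z = u a + (\<Sum>i\<in>I. u i)" "\<forall>i\<in>insert a I. u i \<in> U i"
    using assms unfolding family_sum_def by auto
  then show "z \<in> {x + y |x y. x \<in> U a \<and> y \<in> family_sum I U}"
    unfolding family_sum_def by blast
next
  fix z assume "z \<in> {x + y |x y. x \<in> U a \<and> y \<in> family_sum I U}"
  then obtain x u where xu: "z = x + (\<Sum>i\<in>I. u i)" "x \<in> U a" "\<forall>i\<in>I. u i \<in> U i"
    unfolding family_sum_def by blast
  have "z = (\<Sum>i\<in>insert a I. (u(a := x)) i)"
    unfolding sum_insert_fun_upd[OF assms] by (rule xu(1))
  moreover have "\<forall>i\<in>insert a I. (u(a := x)) i \<in> U i" using xu by auto
  ultimately show "z \<in> family_sum (insert a I) U" unfolding family_sum_def by blast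
qed

lemma subspace_family_sum:
  assumes "\<forall>i\<in>I. subspace (U i)"
  shows "subspace (family_sum I U)"
  unfolding subspace_def family_sum_def
proof (intro conjI allI impI ballI)
  show "0 \<in> {(\<Sum>i\<in>I. u i) | u. \<forall>i\<in>I. u i \<in> U i}"
    using assms by (intro CollectI exI[of _ "\<lambda>_. 0"]) (auto simp: subspace_0)
next
  fix x y assume "x \<in> {(\<Sum>i\<in>I. u i) | u. \<forall>i\<in>I. u i \<in> U i}" "y \<in> {(\<Sum>i\<in>I. u i) | u. \<forall>i\<in>I. u i \<in> U i}"
  then obtain u w where "x = (\<Sum>i\<in>I. u i)" "\<forall>i\<in>I. u i \<in> U i"
    and "y = (\<Sum>i\<in>I. w i)" "\<forall>i\<in>I. w i \<in> U i" by blast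
  then show "x + y \<in> {(\<Sum>i\<in>I. u i) | u. \<forall>i\<in>I. u i \<in> U i}"
    using assms by (intro CollectI exI[of _ "\<lambda>i. u i + w i"]) (auto simp: sum.distrib subspace_add)
next
  fix c x assume "x \<in> {(\<Sum>i\<in>I. u i) | u. \<forall>i\<in>I. u i \<in> U i}"
  then obtain u where "x = (\<Sum>i\<in>I. u i)" "\<forall>i\<in>I. u i \<in> U i" by blast
  then show "c *s x \<in> {(\<Sum>i\<in>I. u i) | u. \<forall>i\<in>I. u i \<in> U i}"
    using assms by (intro CollectI exI[of _ "\<lambda>i. c *s u i"]) (auto simp: scale_sum_right subspace_scale)
qed

lemma dim_family_sum:
  assumes "finite I" and "\<forall>i\<in>I. subspace (U i)"
    and "\<And>u. \<forall>i\<in>I. u i \<in> U i \<Longrightarrow> (\<Sum>i\<in>I. u i) = 0 \<Longrightarrow> \<forall>i\<in>I. u i = 0"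
  shows "dim (family_sum I U) = (\<Sum>i\<in>I. dim (U i))"
  using assms
proof (induction I rule: finite_induct)
  case empty
  have "family_sum {} U = {0}" unfolding family_sum_def by auto
  then show ?case by simp
next
  case (insert a I)
  have sub: "subspace (U a)" "subspace (family_sum I U)"
    using insert.prems(1) subspace_family_sum[of I U] by auto
  have extend: "\<forall>i\<in>insert a I. (u(a := z)) i \<in> U i"
    if "\<forall>i\<in>I. u i \<in> U i" "z \<in> U a" for u z
    using that by auto
  note sum_upd = sum_insert_fun_upd[OF insert.hyps]
  have "dim (family_sum I U) = (\<Sum>i\<in>I. dim (U i))"
  proof (rule insert.IH)
    fix u assume u: "\<forall>i\<in>I. u i \<in> U i" "(\<Sum>i\<in>I. u i) = 0"
    have "(\<Sum>i\<in>insert a I. (u(a := 0)) i) = 0"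
      by (simp only: sum_upd u(2) add_0_left)
    then have "\<forall>i\<in>insert a I. (u(a := 0)) i = 0"
      using insert.prems(2) extend[OF u(1) subspace_0[OF sub(1)]] by blast
    then show "\<forall>i\<in>I. u i = 0" using insert.hyps(2) by (metis fun_upd_other insertCI)
  qed (use insert.prems(1) in auto)
  moreover have "U a \<inter> family_sum I U = {0}"
  proof (intro set_eqI iffI)
    fix z assume "z \<in> U a \<inter> family_sum I U"
    then obtain u where u: "z \<in> U a" "z = (\<Sum>i\<in>I. u i)" "\<forall>i\<in>I. u i \<in> U i"
      unfolding family_sum_def by blast
    then have "(\<Sum>i\<in>insert a I. (u(a := - z)) i) = 0"
      unfolding sum_upd using u(2) by simp
    then have "\<forall>i\<in>insert a I. (u(a := - z)) i = 0"
      using insert.prems(2) extend[OF u(3) subspace_neg[OF sub(1) u(1)]] by blast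
    then show "z \<in> {0}" by simp
  qed (use sub in \<open>auto simp: subspace_0\<close>)
  ultimately show ?case
    using dim_sums_Int[OF sub] insert.hyps family_sum_insert[OF insert.hyps] by simp
qed

end

section \<open>Weight modules of sl2\<close>

locale sl2_weight_module = finite_dimensional_vector_space scale Basis
  for scale :: "'a::field_char_0 \<Rightarrow> 'b::ab_group_add \<Rightarrow> 'b" (infixr \<open>*s\<close> 75)
    and Basis :: "'b set" +
  fixes e f :: "'b \<Rightarrow> 'b" and W :: "int \<Rightarrow> 'b set" and N :: int
  assumes linear_e: "Vector_Spaces.linear scale scale e"
    and linear_f: "Vector_Spaces.linear scale scale f"
    and subspace_W: "subspace (W r)"
    and e_W: "x \<in> W r \<Longrightarrow> e x \<in> W (r + 1)"
    and f_W: "x \<in> W r \<Longrightarrow> f x \<in> W (r - 1)"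
    and W_trivial: "r < 0 \<or> N < r \<Longrightarrow> W r = {0}"
    and commutator: "x \<in> W r \<Longrightarrow> e (f x) - f (e x) = of_int (2 * r - N) *s x"
begin

lemma e_pow_W: "x \<in> W r \<Longrightarrow> (e ^^ k) x \<in> W (r + int k)"
proof (induction k)
  case (Suc k)
  then show ?case using e_W[OF Suc.IH[OF Suc.prems]] by (simp add: algebra_simps)
qed simp

lemma f_pow_W: "x \<in> W r \<Longrightarrow> (f ^^ k) x \<in> W (r - int k)"
proof (induction k)
  case (Suc k)
  then show ?case using f_W[OF Suc.IH[OF Suc.prems]] by (simp add: algebra_simps)
qed simp

lemma e_pow_0: "(e ^^ k) 0 = 0"
proof -
  interpret Vector_Spaces.linear scale scale "e ^^ k" by (rule linear_funpow[OF linear_e])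
  show ?thesis by (rule zero)
qed

lemma f_e_pow:
  assumes x: "x \<in> W r"
  shows "f ((e ^^ Suc j) x) = (e ^^ Suc j) (f x) - of_int ((int j + 1) * (2 * r - N + int j)) *s (e ^^ j) x"
proof (induction j)
  case 0
  show ?case using commutator[OF x] by (simp add: algebra_simps)
next
  case (Suc j)
  interpret e: Vector_Spaces.linear scale scale e by (rule linear_e)
  define y where "y = (e ^^ Suc j) x"
  define c where "c = (of_int ((int j + 1) * (2 * r - N + int j)) :: 'a)"
  define d where "d = (of_int (2 * (r + int (Suc j)) - N) :: 'a)"
  have "e (f y) - f (e y) = d *s y"
    using commutator[OF e_pow_W[OF x, of "Suc j"]] unfolding y_def d_def .
  then have "f (e y) = e (f y) - d *s y" by (simp add: algebra_simps)
  also have "e (f y) = (e ^^ Suc (Suc j)) (f x) - c *s y"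
    using Suc unfolding y_def c_def by (simp add: e.diff e.scale)
  finally have "f (e y) = (e ^^ Suc (Suc j)) (f x) - (c + d) *s y"
    by (simp add: scale_left_distrib)
  also have "c + d = of_int ((int (Suc j) + 1) * (2 * r - N + int (Suc j)))"
    unfolding c_def d_def by (simp add: algebra_simps)
  finally show ?case unfolding y_def by simp
qed

text \<open>Induction on the weight r: if e^(k+1) kills x, then e^(k+2) kills f x, which has weight
  r - 1, so f x = 0; now \<open>f_e_pow\<close> leaves (k + 1)(2r - N + k) e^k x = 0, and the coefficient
  is nonzero.\<close>
lemma e_pow_eq_0_imp_eq_0:
  assumes "2 * r + int k \<le> N" "x \<in> W r" "(e ^^ k) x = 0"
  shows "x = 0"
  using assms
proof (induction "nat (r + 1)" arbitrary: r k x rule: less_induct)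
  case less
  from less.prems show ?case
  proof (induction k arbitrary: x)
    case 0
    then show ?case by simp
  next
    case (Suc k)
    interpret e: Vector_Spaces.linear scale scale e by (rule linear_e)
    interpret f: Vector_Spaces.linear scale scale f by (rule linear_f)
    have fx_killed: "(e ^^ Suc (Suc k)) (f x) = 0"
      using f_e_pow[OF Suc.prems(2), of "Suc k"] Suc.prems(3) by (simp add: e.zero f.zero)
    have "f x = 0"
    proof (cases "r \<le> 0")
      case True
      then show ?thesis using f_W[OF Suc.prems(2)] W_trivial[of "r - 1"] by simp
    next
      case False
      then show ?thesis
        using less.hyps[of "r - 1" "Suc (Suc k)" "f x"] f_W[OF Suc.prems(2)] Suc.prems(1) fx_killed
        by simp
    qed
    then have "of_int ((int k + 1) * (2 * r - N + int k)) *s (e ^^ k) x = 0"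
      using f_e_pow[OF Suc.prems(2), of k] Suc.prems(3) e_pow_0 by (simp add: f.zero)
    moreover have "(of_int ((int k + 1) * (2 * r - N + int k)) :: 'a) \<noteq> 0"
      using Suc.prems(1) by (simp only: of_int_eq_0_iff) simp
    ultimately have "(e ^^ k) x = 0" using scale_eq_0_iff by blast
    then show ?case using Suc.IH Suc.prems by simp
  qed
qed

lemma f_pow_eq_0_imp_eq_0:
  assumes "N \<le> 2 * r - int k" "x \<in> W r" "(f ^^ k) x = 0"
  shows "x = 0"
proof -
  interpret mirror: sl2_weight_module scale Basis f e "\<lambda>r. W (N - r)" N
  proof (intro sl2_weight_module.intro[OF finite_dimensional_vector_space_axioms]
      sl2_weight_module_axioms.intro)
    fix r x assume x: "x \<in> W (N - r)"
    show "f x \<in> W (N - (r + 1))" using f_W[OF x] by (simp add: algebra_simps)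
    show "e x \<in> W (N - (r - 1))" using e_W[OF x] by (simp add: algebra_simps)
    have "f (e x) - e (f x) = - (of_int (2 * (N - r) - N) *s x)"
      using commutator[OF x] by (simp add: algebra_simps)
    also have "\<dots> = of_int (2 * r - N) *s x"
      by (simp flip: scale_minus_left add: algebra_simps)
    finally show "f (e x) - e (f x) = of_int (2 * r - N) *s x" .
  qed (use linear_e linear_f subspace_W W_trivial in auto)
  show ?thesis using mirror.e_pow_eq_0_imp_eq_0[of "N - r" k x] assms by simp
qed

lemma e_pow_image_W_subset: "(e ^^ k) ` W r \<subseteq> W (r + int k)"
  using e_pow_W by blast

lemma f_pow_image_W_subset: "(f ^^ k) ` W r \<subseteq> W (r - int k)"
  using f_pow_W by blast

lemma subspace_e_pow_image_W: "subspace ((e ^^ k) ` W r)"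
proof -
  interpret Vector_Spaces.linear scale scale "e ^^ k" by (rule linear_funpow[OF linear_e])
  show ?thesis by (rule subspace_image[OF subspace_W])
qed

lemma dim_e_pow_image_W:
  assumes "2 * r + int k \<le> N"
  shows "dim ((e ^^ k) ` W r) = dim (W r)"
  using e_pow_eq_0_imp_eq_0[where r = r and k = k] assms
  by (intro dim_image_eq_if_trivial_kernel linear_funpow linear_e subspace_W) auto

lemma e_pow_image_W_reflect:
  assumes "0 \<le> r" "2 * r \<le> N"
  shows "(e ^^ nat (N - 2 * r)) ` W r = W (N - r)"
proof -
  define k where "k = nat (N - 2 * r)"
  have k: "int k = N - 2 * r" using assms unfolding k_def by simp
  have "dim (W (N - r)) = dim ((f ^^ k) ` W (N - r))"
    using f_pow_eq_0_imp_eq_0[where r = "N - r" and k = k] k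
    by (intro dim_image_eq_if_trivial_kernel[symmetric] linear_funpow linear_f subspace_W) auto
  also have "\<dots> \<le> dim (W r)"
    using f_pow_image_W_subset[of k "N - r"] k by (intro dim_subset) simp
  also have "\<dots> = dim ((e ^^ k) ` W r)"
    using dim_e_pow_image_W[of r k] k by simp
  finally have "dim (W (N - r)) \<le> dim ((e ^^ k) ` W r)" .
  moreover have "(e ^^ k) ` W r \<subseteq> W (N - r)"
    using e_pow_image_W_subset[of k r] k by simp
  ultimately show ?thesis
    unfolding k_def[symmetric] by (intro subspace_dim_equal subspace_e_pow_image_W subspace_W)
qed

lemma dim_W_reflect: "dim (W (N - r)) = dim (W r)"
proof -
  have *: "dim (W (N - s)) = dim (W s)" if "0 \<le> s" "2 * s \<le> N" for s
    using dim_e_pow_image_W[of s "nat (N - 2 * s)"] e_pow_image_W_reflect[OF that] that by simp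
  show ?thesis
  proof (cases "r < 0 \<or> N < r")
    case True
    then show ?thesis using W_trivial[of r] W_trivial[of "N - r"] by auto
  next
    case False
    then show ?thesis using *[of r] *[of "N - r"] by (cases "2 * r \<le> N") auto
  qed
qed

lemma e_pow_image_W:
  assumes "N \<le> 2 * r + int k"
  shows "(e ^^ k) ` W r = W (r + int k)"
proof (cases "N < r + int k")
  case True
  then have "W (r + int k) = {0}" using W_trivial by simp
  then show ?thesis using e_pow_image_W_subset[of k r] subspace_0[OF subspace_W, of r] e_pow_0
    by force
next
  case False
  define s where "s = N - (r + int k)"
  have s: "0 \<le> s" "s \<le> r" "2 * s \<le> N" using False assms unfolding s_def by auto
  have "nat (N - 2 * s) = k + nat (r - s)" using s unfolding s_def by simp
  then have "W (r + int k) = (e ^^ k) ` (e ^^ nat (r - s)) ` W s"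
    using e_pow_image_W_reflect[OF s(1,3)] unfolding s_def
    by (simp add: funpow_add image_comp)
  also have "\<dots> \<subseteq> (e ^^ k) ` W r"
    using e_pow_image_W_subset[of "nat (r - s)" s] s(2) by (intro image_mono) simp
  finally show ?thesis using e_pow_image_W_subset by blast
qed

lemma dim_kernel_e_pow_W:
  "int (dim {x \<in> W r. (e ^^ k) x = 0}) =
     (if N < 2 * r + int k then int (dim (W r)) - int (dim (W (r + int k))) else 0)"
proof (cases "N < 2 * r + int k")
  case True
  then show ?thesis
    using dim_kernel_add_dim_image[OF linear_funpow[OF linear_e, of k] subspace_W[of r]]
      e_pow_image_W[where r = r and k = k] by simp
next
  case False
  then have "{x \<in> W r. (e ^^ k) x = 0} = {0}"
    using e_pow_eq_0_imp_eq_0[where r = r and k = k] subspace_0[OF subspace_W] e_pow_0 by auto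
  then show ?thesis using False by simp
qed

end

section \<open>Window sums of a symmetric weight sequence\<close>

lemma sum_if_double_eq:
  fixes w :: "int \<Rightarrow> int"
  assumes "\<And>r. r < 0 \<or> N < r \<Longrightarrow> w r = 0"
  shows "(\<Sum>r\<in>{0..N}. if 2 * r = c then w r else 0) = (if even c then w (c div 2) else 0)"
proof (cases "even c")
  case True
  have "(\<Sum>r\<in>{0..N}. if 2 * r = c then w r else 0) = (\<Sum>r\<in>{0..N}. if r = c div 2 then w r else 0)"
    using True by (intro sum.cong) auto
  then show ?thesis using True assms[of "c div 2"] by auto
next
  case False
  then have "2 * r \<noteq> c" for r by auto
  then show ?thesis using False by simp
qed

definition window_sum :: "(int \<Rightarrow> int) \<Rightarrow> int \<Rightarrow> int \<Rightarrow> int" where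
  "window_sum w N D = (\<Sum>r\<in>{0..N}. if N - D < 2 * r \<and> 2 * r \<le> N + D then w r else 0)"

lemma sum_differences_eq_window_sum:
  fixes w :: "int \<Rightarrow> int"
  assumes zero: "\<And>r. r < 0 \<or> N < r \<Longrightarrow> w r = 0" and D: "0 \<le> D"
  shows "(\<Sum>r\<in>{0..N}. if N < 2 * r + D then w r - w (r + D) else 0) = window_sum w N D"
proof -
  define f where "f s = (if N + D < 2 * s then w s else 0)" for s
  have "(\<Sum>r\<in>{0..N}. if N < 2 * r + D then w (r + D) else 0) = (\<Sum>r\<in>{0..N}. f (r + D))"
    unfolding f_def by (intro sum.cong) auto
  also have "\<dots> = (\<Sum>s\<in>{D..N + D}. f s)"
    using sum.reindex[of "\<lambda>r. r + D" "{0..N}" f] by (simp add: inj_on_def)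
  also have "\<dots> = (\<Sum>s\<in>{D..N}. f s)"
    using D zero by (intro sum.mono_neutral_right) (auto simp: f_def)
  also have "\<dots> = (\<Sum>s\<in>{0..N}. f s)"
    using D by (intro sum.mono_neutral_left) (auto simp: f_def)
  finally have shifted: "(\<Sum>r\<in>{0..N}. if N < 2 * r + D then w (r + D) else 0) = (\<Sum>s\<in>{0..N}. f s)" .
  have "(\<Sum>r\<in>{0..N}. if N < 2 * r + D then w r - w (r + D) else 0) =
      (\<Sum>r\<in>{0..N}. if N < 2 * r + D then w r else 0) - (\<Sum>r\<in>{0..N}. if N < 2 * r + D then w (r + D) else 0)"
    unfolding sum_subtractf[symmetric] by (intro sum.cong) auto
  also have "\<dots> = (\<Sum>r\<in>{0..N}. (if N < 2 * r + D then w r else 0) - f r)"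
    unfolding shifted sum_subtractf ..
  also have "\<dots> = window_sum w N D"
    unfolding window_sum_def f_def using D by (intro sum.cong) auto
  finally show ?thesis .
qed

lemma window_sum_diff:
  fixes w :: "int \<Rightarrow> int"
  assumes zero: "\<And>r. r < 0 \<or> N < r \<Longrightarrow> w r = 0" and symmetric: "\<And>r. w (N - r) = w r"
    and D: "1 \<le> D"
  shows "window_sum w N D - window_sum w N (D - 1) = w ((N - (D - 1)) div 2)"
proof -
  have "window_sum w N D - window_sum w N (D - 1) =
      (\<Sum>r\<in>{0..N}. if 2 * r = N - D + 1 then w r else 0) + (\<Sum>r\<in>{0..N}. if 2 * r = N + D then w r else 0)"
    unfolding window_sum_def sum_subtractf[symmetric] sum.distrib[symmetric]
    using D by (intro sum.cong) auto
  also have "\<dots> = (if even (N - D + 1) then w ((N - D + 1) div 2) else 0)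
      + (if even (N + D) then w ((N + D) div 2) else 0)"
    by (simp only: sum_if_double_eq[OF zero])
  also have "\<dots> = w ((N - (D - 1)) div 2)"
  proof (cases "even (N + D)")
    case True
    then have "odd (N - D + 1)" "(N - (D - 1)) div 2 = N - (N + D) div 2" by presburger+
    then show ?thesis using True symmetric by simp
  next
    case False
    then show ?thesis by (simp add: algebra_simps)
  qed
  finally show ?thesis .
qed

section \<open>The fermionic Fock space\<close>

lemma sum_subset_atLeastAtMost_bounds:
  "finite S \<Longrightarrow> S \<subseteq> {1..n} \<Longrightarrow>
    card S * (card S + 1) \<le> 2 * \<Sum>S \<and> 2 * \<Sum>S + card S * card S \<le> card S * (2 * n + 1)"
proof (induction n arbitrary: S)
  case 0
  then show ?case by simp
next
  case (Suc n)
  show ?case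
  proof (cases "Suc n \<in> S")
    case True
    define S' where "S' = S - {Suc n}"
    have S': "finite S'" "S' \<subseteq> {1..n}" using Suc.prems unfolding S'_def by auto
    define c where "c = card S'"
    have card_S: "card S = c + 1" and sum_S: "\<Sum>S = \<Sum>S' + Suc n"
      using card.remove[OF Suc.prems(1) True] sum.remove[OF Suc.prems(1) True, of id]
      unfolding S'_def c_def by simp_all
    moreover have "c \<le> n" using card_mono[OF _ S'(2)] unfolding c_def by simp
    ultimately show ?thesis
      using Suc.IH[OF S'] unfolding card_S sum_S c_def[symmetric] by (simp add: algebra_simps)
  next
    case False
    then have "S \<subseteq> {1..n}" using Suc.prems(2) by (auto simp: le_Suc_eq)
    then have "card S * (card S + 1) \<le> 2 * \<Sum>S \<and> 2 * \<Sum>S + card S * card S \<le> card S * (2 * n + 1)"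
      using Suc.IH Suc.prems(1) by blast
    moreover have "card S * (2 * n + 1) \<le> card S * (2 * Suc n + 1)" by simp
    ultimately show ?thesis by linarith
  qed
qed

lemma anticomm_at: "anticomm A B = C \<Longrightarrow> A (B x) = C x - B (A x)"
  unfolding anticomm_def by (metis add_diff_cancel_right')

locale fermionic_fock_space =
  fixes sm :: "complex \<Rightarrow> 'v::ab_group_add \<Rightarrow> 'v" and l :: nat
    and b b' :: "nat \<Rightarrow> 'v \<Rightarrow> 'v" and right :: 'v
  assumes fermion_system: "fermion_system sm l b b' right"
begin

abbreviation "patterns \<equiv> occ_patterns l"
abbreviation "state nu \<equiv> creation_word b' nu l right"
abbreviation "states \<equiv> state ` patterns"
abbreviation "V m \<equiv> Vsp sm l b b' m"
abbreviation "W m r \<equiv> Vsp_r sm l b b' m r"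
abbreviation "max_weight m \<equiv> int m * (int l - int m)"
abbreviation "M \<equiv> Mop l b b'"

sublocale vector_space sm
  using fermion_system unfolding fermion_system_def by blast

lemma finite_patterns: "finite patterns"
proof -
  have "patterns \<subseteq> (\<lambda>S k. k \<in> S) ` Pow {1..l}"
  proof
    fix nu assume "nu \<in> patterns"
    then have "{k. nu k} \<subseteq> {1..l}" "nu = (\<lambda>k. k \<in> {k. nu k})"
      unfolding occ_patterns_def by auto
    then show "nu \<in> (\<lambda>S k. k \<in> S) ` Pow {1..l}" by blast
  qed
  then show ?thesis using finite_subset by blast
qed

lemma inj_on_state: "inj_on state patterns"
  and independent_states: "independent states"
  and span_states: "span states = UNIV"
  using fermion_system unfolding fermion_system_def by blast+

sublocale finite_dimensional_vector_space sm states
  by unfold_locales (use finite_patterns independent_states span_states in auto)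

interpretation pair: vector_space_pair sm sm ..

lemma linear_b: "k \<in> {1..l} \<Longrightarrow> Vector_Spaces.linear sm sm (b k)"
  and linear_b': "k \<in> {1..l} \<Longrightarrow> Vector_Spaces.linear sm sm (b' k)"
  using fermion_system unfolding fermion_system_def by blast+

lemmas b_simps = pair.linear_0[OF linear_b] pair.linear_add[OF linear_b]
  pair.linear_diff[OF linear_b] pair.linear_neg[OF linear_b]
  pair.linear_scale[OF linear_b] pair.linear_sum[OF linear_b]

lemmas b'_simps = pair.linear_0[OF linear_b'] pair.linear_add[OF linear_b']
  pair.linear_diff[OF linear_b'] pair.linear_neg[OF linear_b']
  pair.linear_scale[OF linear_b'] pair.linear_sum[OF linear_b']

lemma anticomm_relations:
  assumes "j \<in> {1..l}" "k \<in> {1..l}"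
  shows "anticomm (b j) (b k) = (\<lambda>_. 0)" "anticomm (b' j) (b' k) = (\<lambda>_. 0)"
    "anticomm (b j) (b' k) = (\<lambda>x. if j = k then x else 0)"
  using fermion_system assms unfolding fermion_system_def by blast+

context
  fixes j k assumes jk: "j \<in> {1..l}" "k \<in> {1..l}"
begin

lemma b_b: "b j (b k x) = - b k (b j x)"
  using anticomm_at[OF anticomm_relations(1)[OF jk], of x] by simp

lemma b'_b': "b' j (b' k x) = - b' k (b' j x)"
  using anticomm_at[OF anticomm_relations(2)[OF jk], of x] by simp

lemma b_b': "b j (b' k x) = (if j = k then x else 0) - b' k (b j x)"
  using anticomm_at[OF anticomm_relations(3)[OF jk], of x] by simp

end

lemma b_right: "k \<in> {1..l} \<Longrightarrow> b k right = 0"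
  using fermion_system unfolding fermion_system_def by blast

definition number_op :: "nat \<Rightarrow> 'v \<Rightarrow> 'v" where
  "number_op k x = b' k (b k x)"

lemma linear_number_op: "k \<in> {1..l} \<Longrightarrow> Vector_Spaces.linear sm sm (number_op k)"
  using Vector_Spaces.linear_compose[OF linear_b linear_b']
  unfolding number_op_def[abs_def] comp_def by blast

lemma number_op_b':
  assumes "j \<in> {1..l}" "k \<in> {1..l}"
  shows "number_op k (b' j x) = b' j (number_op k x) + (if j = k then b' j x else 0)"
  using assms unfolding number_op_def
  by (auto simp: b_b'[OF assms(2,1)] b'_b'[OF assms(2,1)] b'_simps)

lemma number_op_b:
  assumes "j \<in> {1..l}" "k \<in> {1..l}"
  shows "number_op k (b j x) = b j (number_op k x) - (if j = k then b j x else 0)"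
  using assms unfolding number_op_def
  by (auto simp: b_b[OF assms(2,1)] b_b'[OF assms(1,2)] b'_simps)

lemma number_op_creation_word:
  assumes k: "k \<in> {1..l}"
  shows "n \<le> l \<Longrightarrow> number_op k y = sm c y \<Longrightarrow>
    number_op k (creation_word b' nu n y) = sm (c + (if nu k \<and> k \<le> n then 1 else 0)) (creation_word b' nu n y)"
proof (induction n arbitrary: y c)
  case 0
  then show ?case using k by simp
next
  case (Suc n)
  define y' where "y' = (if nu (Suc n) then b' (Suc n) y else y)"
  have n: "Suc n \<in> {1..l}" using Suc.prems by simp
  have "number_op k y' = sm (c + (if nu (Suc n) \<and> k = Suc n then 1 else 0)) y'"
    using number_op_b'[OF n k, of y] Suc.prems(2) n
    by (auto simp: y'_def b'_simps scale_left_distrib)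
  then have "number_op k (creation_word b' nu n y') =
      sm (c + (if nu (Suc n) \<and> k = Suc n then 1 else 0) + (if nu k \<and> k \<le> n then 1 else 0))
        (creation_word b' nu n y')"
    using Suc.IH Suc.prems(1) by simp
  moreover have "creation_word b' nu (Suc n) y = creation_word b' nu n y'" by (simp add: y'_def)
  ultimately show ?case by (cases "k = Suc n") auto
qed

lemma number_op_state:
  "nu \<in> patterns \<Longrightarrow> k \<in> {1..l} \<Longrightarrow> number_op k (state nu) = sm (if nu k then 1 else 0) (state nu)"
  using number_op_creation_word[of k l right 0 nu] b_right[of k]
  unfolding number_op_def occ_patterns_def by (auto simp: b'_simps)

definition weighted_number_op :: "(nat \<Rightarrow> complex) \<Rightarrow> 'v \<Rightarrow> 'v" where
  "weighted_number_op g x = (\<Sum>k=1..l. sm (g k) (number_op k x))"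

abbreviation "position_op \<equiv> weighted_number_op of_nat"

lemma numop_eq_weighted_number_op: "numop l b b' = weighted_number_op (\<lambda>_. 1)"
  unfolding numop_def weighted_number_op_def number_op_def by simp

lemma Omegaop_eq_position_op:
  "Omegaop sm l b b' x = position_op x - sm (1/2) (numop l b b' (numop l b b' x) + numop l b b' x)"
  unfolding Omegaop_def weighted_number_op_def number_op_def by simp

lemma linear_weighted_number_op: "Vector_Spaces.linear sm sm (weighted_number_op g)"
  unfolding weighted_number_op_def[abs_def]
  by (intro pair.linear_compose_sum ballI pair.linear_compose_scale_right linear_number_op)

lemma linear_numop: "Vector_Spaces.linear sm sm (numop l b b')"
  unfolding numop_eq_weighted_number_op by (rule linear_weighted_number_op)

lemma linear_Omegaop: "Vector_Spaces.linear sm sm (Omegaop sm l b b')"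
  unfolding Omegaop_eq_position_op[abs_def]
  by (intro pair.linear_compose_sub pair.linear_compose_scale_right pair.linear_compose_add
      linear_weighted_number_op linear_numop
      Vector_Spaces.linear_compose[OF linear_numop linear_numop, unfolded comp_def])

definition occupied :: "(nat \<Rightarrow> bool) \<Rightarrow> nat set" where
  "occupied nu = {k \<in> {1..l}. nu k}"

lemma weighted_number_op_state:
  assumes "nu \<in> patterns"
  shows "weighted_number_op g (state nu) = sm (\<Sum>k\<in>occupied nu. g k) (state nu)"
proof -
  have "weighted_number_op g (state nu) = (\<Sum>k=1..l. sm (if nu k then g k else 0) (state nu))"
    unfolding weighted_number_op_def using number_op_state[OF assms] by (auto intro!: sum.cong)
  also have "\<dots> = sm (\<Sum>k=1..l. if nu k then g k else 0) (state nu)"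
    by (simp add: scale_sum_left)
  also have "(\<Sum>k=1..l. if nu k then g k else 0) = (\<Sum>k\<in>occupied nu. g k)"
    unfolding occupied_def by (rule sum.inter_filter[symmetric]) simp
  finally show ?thesis .
qed

definition omega :: "(nat \<Rightarrow> bool) \<Rightarrow> complex" where
  "omega nu = of_nat (\<Sum>(occupied nu)) - (of_nat (card (occupied nu))^2 + of_nat (card (occupied nu))) / 2"

lemma numop_state: "nu \<in> patterns \<Longrightarrow> numop l b b' (state nu) = sm (of_nat (card (occupied nu))) (state nu)"
  unfolding numop_eq_weighted_number_op by (simp add: weighted_number_op_state)

lemma Omegaop_state:
  assumes nu: "nu \<in> patterns"
  shows "Omegaop sm l b b' (state nu) = sm (omega nu) (state nu)"
proof -
  interpret numop: Vector_Spaces.linear sm sm "numop l b b'" by (rule linear_numop)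
  define c where "c = (of_nat (card (occupied nu)) :: complex)"
  define w where "w = (of_nat (\<Sum>(occupied nu)) :: complex)"
  have "Omegaop sm l b b' (state nu) = sm w (state nu) - sm (1/2) (sm (c * c) (state nu) + sm c (state nu))"
    unfolding Omegaop_eq_position_op using nu
    by (simp add: weighted_number_op_state numop_state numop.scale c_def w_def)
  also have "\<dots> = sm (w - (c * c + c) / 2) (state nu)"
    by (simp add: scale_right_distrib scale_left_diff_distrib flip: scale_left_distrib)
  finally show ?thesis unfolding omega_def c_def w_def by (simp add: power2_eq_square)
qed

lemma omega_range: "\<exists>r. 0 \<le> r \<and> r \<le> max_weight (card (occupied nu)) \<and> omega nu = of_int r"
proof -
  define m where "m = card (occupied nu)"
  define s where "s = \<Sum>(occupied nu)"
  have "finite (occupied nu)" "occupied nu \<subseteq> {1..l}" unfolding occupied_def by auto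
  then have "m * (m + 1) \<le> 2 * s" "2 * s + m * m \<le> m * (2 * l + 1)"
    using sum_subset_atLeastAtMost_bounds unfolding m_def s_def by blast+
  then have "int (m * (m + 1)) \<le> int (2 * s)" "int (2 * s + m * m) \<le> int (m * (2 * l + 1))"
    by (simp_all only: of_nat_mono)
  then have bounds: "int m * int m + int m \<le> 2 * int s" "2 * int s + int m * int m \<le> 2 * int m * int l + int m"
    by (simp_all only: of_nat_mult of_nat_add of_nat_numeral of_nat_1 algebra_simps)
  define r where "r = int s - int (m * (m + 1) div 2)"
  have "even (m * (m + 1))" by simp
  then have r2: "2 * r = 2 * int s - (int m * int m + int m)"
    unfolding r_def by (simp add: algebra_simps of_nat_div)
  have "0 \<le> r" "r \<le> int m * (int l - int m)"
    using bounds r2 by (simp_all add: algebra_simps)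
  moreover have "omega nu = of_int r"
  proof -
    have "(of_int (2 * r) :: complex) = of_int (2 * int s - (int m * int m + int m))"
      using r2 by simp
    then show ?thesis unfolding omega_def m_def[symmetric] s_def[symmetric]
      by (simp add: field_simps power2_eq_square)
  qed
  ultimately show ?thesis unfolding m_def by blast
qed

definition coord :: "'v \<Rightarrow> (nat \<Rightarrow> bool) \<Rightarrow> complex" where
  "coord x nu = representation states x (state nu)"

lemma coord_add: "coord (x + y) nu = coord x nu + coord y nu"
  unfolding coord_def using representation_add[OF independent_states] span_states by simp

lemma coord_scale: "coord (sm c x) nu = c * coord x nu"
  unfolding coord_def using representation_scale[OF independent_states] span_states by simp

lemma coord_0: "coord 0 nu = 0"
  unfolding coord_def by (simp add: representation_zero)

lemma coord_sum: "coord (sum g A) nu = (\<Sum>i\<in>A. coord (g i) nu)"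
  by (induction A rule: infinite_finite_induct) (auto simp: coord_0 coord_add)

lemma coord_state:
  assumes "nu \<in> patterns" "mu \<in> patterns"
  shows "coord (state nu) mu = (if nu = mu then 1 else 0)"
proof -
  have "state mu = state nu \<longleftrightarrow> mu = nu" using inj_on_state assms by (auto dest: inj_onD)
  then show ?thesis unfolding coord_def using representation_basis[OF independent_states] assms by auto
qed

lemma coord_state_sum:
  assumes "mu \<in> patterns"
  shows "coord (\<Sum>nu\<in>patterns. sm (a nu) (state nu)) mu = a mu"
proof -
  have "coord (\<Sum>nu\<in>patterns. sm (a nu) (state nu)) mu = (\<Sum>nu\<in>patterns. if nu = mu then a nu else 0)"
    using assms by (auto simp: coord_sum coord_scale coord_state intro!: sum.cong)
  then show ?thesis using assms finite_patterns by simp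
qed

lemma state_expansion: "x = (\<Sum>nu\<in>patterns. sm (coord x nu) (state nu))"
proof -
  have "x = (\<Sum>v\<in>states. sm (representation states x v) v)"
    using sum_representation_eq[OF independent_states _ finite_Basis order_refl] span_states by simp
  also have "\<dots> = (\<Sum>nu\<in>patterns. sm (coord x nu) (state nu))"
    unfolding coord_def using sum.reindex[OF inj_on_state] by simp
  finally show ?thesis .
qed

lemma coord_eqI: "(\<And>nu. nu \<in> patterns \<Longrightarrow> coord x nu = coord y nu) \<Longrightarrow> x = y"
  using state_expansion[of x] state_expansion[of y] by (metis (no_types, lifting) sum.cong)

lemma coord_diagonal:
  assumes "Vector_Spaces.linear sm sm T"
    and "\<And>nu. nu \<in> patterns \<Longrightarrow> T (state nu) = sm (lam nu) (state nu)"
    and "mu \<in> patterns"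
  shows "coord (T x) mu = lam mu * coord x mu"
proof -
  interpret T: Vector_Spaces.linear sm sm T by fact
  have "T x = (\<Sum>nu\<in>patterns. sm (lam nu * coord x nu) (state nu))"
    by (subst state_expansion[of x]) (simp add: T.sum T.scale assms(2) mult.commute)
  then show ?thesis using coord_state_sum[OF assms(3)] by simp
qed

lemma eigen_iff_coord:
  assumes "Vector_Spaces.linear sm sm T"
    and "\<And>nu. nu \<in> patterns \<Longrightarrow> T (state nu) = sm (lam nu) (state nu)"
  shows "T x = sm c x \<longleftrightarrow> (\<forall>nu\<in>patterns. coord x nu \<noteq> 0 \<longrightarrow> lam nu = c)"
proof
  assume "T x = sm c x"
  then show "\<forall>nu\<in>patterns. coord x nu \<noteq> 0 \<longrightarrow> lam nu = c"
    using coord_diagonal[OF assms] coord_scale by (metis mult_cancel_right)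
next
  assume "\<forall>nu\<in>patterns. coord x nu \<noteq> 0 \<longrightarrow> lam nu = c"
  then show "T x = sm c x"
    using coord_diagonal[OF assms] coord_scale by (intro coord_eqI) (metis mult_zero_right)
qed

lemma Vsp_iff_coord:
  "x \<in> Vsp sm l b b' m \<longleftrightarrow> (\<forall>nu\<in>patterns. coord x nu \<noteq> 0 \<longrightarrow> card (occupied nu) = m)"
  unfolding Vsp_def using eigen_iff_coord[OF linear_numop numop_state, of x "of_nat m"] by simp

lemma Vsp_r_iff_coord:
  "x \<in> Vsp_r sm l b b' m r \<longleftrightarrow>
    (\<forall>nu\<in>patterns. coord x nu \<noteq> 0 \<longrightarrow> card (occupied nu) = m \<and> omega nu = of_int r)"
  unfolding Vsp_r_def using eigen_iff_coord[OF linear_numop numop_state, of x "of_nat m"]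
    eigen_iff_coord[OF linear_Omegaop Omegaop_state, of x "of_int r"] by auto

lemma subspace_V: "subspace (V m)"
  unfolding Vsp_def by (rule subspace_eigenspace[OF linear_numop])

lemma subspace_W: "subspace (W m r)"
proof -
  have "W m r = {x. numop l b b' x = sm (of_nat m) x} \<inter> {x. Omegaop sm l b b' x = sm (of_int r) x}"
    unfolding Vsp_r_def by blast
  then show ?thesis
    using subspace_inter subspace_eigenspace[OF linear_numop] subspace_eigenspace[OF linear_Omegaop]
    by simp
qed

lemma W_subset_V: "W m r \<subseteq> V m"
  unfolding Vsp_r_def Vsp_def by blast

lemma W_trivial:
  assumes "r < 0 \<or> max_weight m < r"
  shows "W m r = {0}"
proof -
  have "x = 0" if x: "x \<in> W m r" for x
  proof (rule coord_eqI)
    fix nu assume nu: "nu \<in> patterns"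
    have "\<not> (card (occupied nu) = m \<and> omega nu = of_int r)"
      using omega_range[of nu] assms by auto
    then show "coord x nu = coord 0 nu" using x nu by (auto simp: Vsp_r_iff_coord coord_0)
  qed
  then show ?thesis using subspace_0[OF subspace_W] by blast
qed

lemma W_independent:
  assumes "finite I" "inj_on g I" "\<forall>i\<in>I. u i \<in> W m (g i)" "(\<Sum>i\<in>I. u i) = 0"
  shows "\<forall>i\<in>I. u i = 0"
proof
  fix i assume i: "i \<in> I"
  show "u i = 0"
  proof (rule coord_eqI)
    fix nu assume nu: "nu \<in> patterns"
    have others: "coord (u j) nu = 0" if j: "j \<in> I" "j \<noteq> i" and "coord (u i) nu \<noteq> 0" for j
    proof (rule ccontr)
      assume "coord (u j) nu \<noteq> 0"
      then have "omega nu = of_int (g j)" using assms(3) j(1) nu by (auto simp: Vsp_r_iff_coord)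
      moreover have "omega nu = of_int (g i)" using assms(3) i nu that(3) by (auto simp: Vsp_r_iff_coord)
      ultimately show False using assms(2) j i by (auto dest: inj_onD)
    qed
    have "0 = (\<Sum>j\<in>I. coord (u j) nu)" using assms(4) by (simp add: coord_sum[symmetric] coord_0)
    also have "\<dots> = coord (u i) nu + (\<Sum>j\<in>I - {i}. coord (u j) nu)"
      using sum.remove[OF assms(1) i] by simp
    finally show "coord (u i) nu = coord 0 nu"
      using others by (cases "coord (u i) nu = 0") (auto simp: coord_0)
  qed
qed

definition weight_component :: "nat \<Rightarrow> int \<Rightarrow> 'v \<Rightarrow> 'v" where
  "weight_component m r x = (\<Sum>nu\<in>patterns.
     sm (if card (occupied nu) = m \<and> omega nu = of_int r then coord x nu else 0) (state nu))"

lemma coord_weight_component: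
  "nu \<in> patterns \<Longrightarrow> coord (weight_component m r x) nu =
    (if card (occupied nu) = m \<and> omega nu = of_int r then coord x nu else 0)"
  unfolding weight_component_def by (rule coord_state_sum)

lemma weight_component_W: "weight_component m r x \<in> W m r"
  unfolding Vsp_r_iff_coord by (simp add: coord_weight_component)

lemma sum_weight_components:
  assumes "x \<in> V m"
  shows "(\<Sum>r\<in>{0..max_weight m}. weight_component m r x) = x"
proof (rule coord_eqI)
  fix nu assume nu: "nu \<in> patterns"
  show "coord (\<Sum>r\<in>{0..max_weight m}. weight_component m r x) nu = coord x nu"
  proof (cases "coord x nu = 0")
    case True
    then show ?thesis by (auto simp: coord_sum coord_weight_component[OF nu] intro!: sum.neutral)
  next
    case False
    then have m: "card (occupied nu) = m" using assms nu Vsp_iff_coord by blast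
    obtain r0 where r0: "0 \<le> r0" "r0 \<le> max_weight m" "omega nu = of_int r0"
      using omega_range[of nu] m by blast
    have "coord (\<Sum>r\<in>{0..max_weight m}. weight_component m r x) nu =
        (\<Sum>r\<in>{0..max_weight m}. if r = r0 then coord x nu else 0)"
      unfolding coord_sum coord_weight_component[OF nu] using m r0(3) by (intro sum.cong) auto
    then show ?thesis using r0(1,2) by simp
  qed
qed

section \<open>The sl2-pair formed by M and F\<close>

definition lowering_coeff :: "nat \<Rightarrow> complex" where
  "lowering_coeff k = of_nat (k * (l - k))"

definition lowering_op :: "'v \<Rightarrow> 'v" where
  "lowering_op x = (\<Sum>k=1..l-1. sm (lowering_coeff k) (b' k (b (k + 1) x)))"

lemma index_bounds: "k \<in> {1..l-1} \<Longrightarrow> k \<in> {1..l} \<and> k + 1 \<in> {1..l}"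
  by auto

lemma linear_b'_b: "i \<in> {1..l} \<Longrightarrow> q \<in> {1..l} \<Longrightarrow> Vector_Spaces.linear sm sm (\<lambda>x. b' i (b q x))"
  using Vector_Spaces.linear_compose[OF linear_b linear_b'] unfolding comp_def by blast

lemma linear_Mop: "Vector_Spaces.linear sm sm M"
  unfolding Mop_def
  by (intro pair.linear_compose_sum ballI linear_b'_b) (auto dest: index_bounds)

lemma linear_lowering_op: "Vector_Spaces.linear sm sm lowering_op"
  unfolding lowering_op_def[abs_def]
  by (intro pair.linear_compose_sum ballI pair.linear_compose_scale_right linear_b'_b)
    (auto dest: index_bounds)

lemma number_op_b'_b:
  assumes "i \<in> {1..l}" "q \<in> {1..l}" "k \<in> {1..l}"
  shows "number_op k (b' i (b q y)) =
    b' i (b q (number_op k y)) + ((if i = k then b' i (b q y) else 0) - (if q = k then b' i (b q y) else 0))"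
  unfolding number_op_b'[OF assms(1,3)] number_op_b[OF assms(2,3)] using assms by (simp add: b'_simps)

lemma weighted_number_op_b'_b:
  assumes iq: "i \<in> {1..l}" "q \<in> {1..l}"
  shows "weighted_number_op g (b' i (b q y)) = b' i (b q (weighted_number_op g y)) + sm (g i - g q) (b' i (b q y))"
proof -
  define X where "X = b' i (b q y)"
  have delta: "(\<Sum>k=1..l. sm (g k) (if j = k then X else 0)) = sm (g j) X" if "j \<in> {1..l}" for j
    using that by (simp add: if_distrib[of "sm _"] cong: if_cong)
  have "weighted_number_op g X = (\<Sum>k=1..l. sm (g k) (b' i (b q (number_op k y)))
        + (sm (g k) (if i = k then X else 0) - sm (g k) (if q = k then X else 0)))"
    unfolding weighted_number_op_def X_def using number_op_b'_b[OF iq]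
    by (auto intro!: sum.cong simp: scale_right_distrib scale_right_diff_distrib)
  also have "\<dots> = b' i (b q (weighted_number_op g y)) + (sm (g i) X - sm (g q) X)"
    unfolding weighted_number_op_def sum.distrib sum_subtractf delta[OF iq(1)] delta[OF iq(2)]
    using iq by (simp add: b_simps b'_simps)
  finally show ?thesis unfolding X_def by (simp add: scale_left_diff_distrib)
qed

lemma weighted_number_op_Mop:
  "weighted_number_op g (M x) = M (weighted_number_op g x) + (\<Sum>j=1..l-1. sm (g (j + 1) - g j) (b' (j + 1) (b j x)))"
proof -
  have "weighted_number_op g (M x) = (\<Sum>j=1..l-1. weighted_number_op g (b' (j + 1) (b j x)))"
    unfolding Mop_def by (rule pair.linear_sum[OF linear_weighted_number_op])
  also have "\<dots> = (\<Sum>j=1..l-1. b' (j + 1) (b j (weighted_number_op g x)) + sm (g (j + 1) - g j) (b' (j + 1) (b j x)))"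
    by (rule sum.cong) (use weighted_number_op_b'_b index_bounds in auto)
  finally show ?thesis unfolding Mop_def by (simp add: sum.distrib)
qed

lemma weighted_number_op_lowering_op:
  "weighted_number_op g (lowering_op x) = lowering_op (weighted_number_op g x)
    + (\<Sum>j=1..l-1. sm (lowering_coeff j) (sm (g j - g (j + 1)) (b' j (b (j + 1) x))))"
proof -
  have "weighted_number_op g (lowering_op x) = (\<Sum>j=1..l-1. sm (lowering_coeff j) (weighted_number_op g (b' j (b (j + 1) x))))"
    unfolding lowering_op_def
    by (simp add: pair.linear_sum[OF linear_weighted_number_op] pair.linear_scale[OF linear_weighted_number_op])
  also have "\<dots> = (\<Sum>j=1..l-1. sm (lowering_coeff j) (b' j (b (j + 1) (weighted_number_op g x)))
      + sm (lowering_coeff j) (sm (g j - g (j + 1)) (b' j (b (j + 1) x))))"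
    by (rule sum.cong) (use weighted_number_op_b'_b index_bounds in \<open>auto simp: scale_right_distrib\<close>)
  finally show ?thesis unfolding lowering_op_def by (simp add: sum.distrib)
qed

lemma numop_Mop: "numop l b b' (M x) = M (numop l b b' x)"
  unfolding numop_eq_weighted_number_op weighted_number_op_Mop by simp

lemma position_op_Mop: "position_op (M x) = M (position_op x) + M x"
  unfolding weighted_number_op_Mop by (simp add: Mop_def)

lemma numop_lowering_op: "numop l b b' (lowering_op x) = lowering_op (numop l b b' x)"
  unfolding numop_eq_weighted_number_op weighted_number_op_lowering_op by simp

lemma position_op_lowering_op: "position_op (lowering_op x) = lowering_op (position_op x) - lowering_op x"
  unfolding weighted_number_op_lowering_op by (simp add: lowering_op_def sum_negf)

lemma b'_b_commutator:
  assumes ijpq: "i \<in> {1..l}" "j \<in> {1..l}" "p \<in> {1..l}" "q \<in> {1..l}"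
  shows "b' i (b j (b' p (b q x))) - b' p (b q (b' i (b j x)))
     = (if j = p then b' i (b q x) else 0) - (if i = q then b' p (b j x) else 0)"
proof -
  define y where "y = b q x"
  define z where "z = b j x"
  have "b' i (b j (b' p y)) = (if j = p then b' i y else 0) + b' p (b' i (b j y))"
    using ijpq by (simp add: b_b'[OF ijpq(2,3)] b'_b'[OF ijpq(1,3)] b'_simps)
  moreover have "b' p (b' i (b j y)) = - (if i = q then b' p z else 0) + b' p (b q (b' i z))"
    using ijpq unfolding y_def z_def
    by (simp add: b_b[OF ijpq(2,4)] b_b'[OF ijpq(4,1)] b'_simps)
  ultimately show ?thesis unfolding y_def[symmetric] z_def by simp
qed

lemma b'_b_sum:
  "i \<in> {1..l} \<Longrightarrow> q \<in> {1..l} \<Longrightarrow>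
    b' i (b q (\<Sum>k\<in>A. sm (g k) (y k))) = (\<Sum>k\<in>A. sm (g k) (b' i (b q (y k))))"
  by (simp add: pair.linear_sum[OF linear_b'_b] pair.linear_scale[OF linear_b'_b])

lemma Mop_lowering_op_commutator_sum:
  "M (lowering_op x) - lowering_op (M x) =
    (\<Sum>j=1..l-1. sm (lowering_coeff j) (number_op (j + 1) x - number_op j x))"
proof -
  let ?J = "{1..l-1}"
  have M_F: "M (lowering_op x) = (\<Sum>j\<in>?J. \<Sum>k\<in>?J. sm (lowering_coeff k) (b' (j + 1) (b j (b' k (b (k + 1) x)))))"
    unfolding Mop_def lowering_op_def
  proof (rule sum.cong[OF refl])
    fix j assume "j \<in> ?J"
    then show "b' (j + 1) (b j (\<Sum>k\<in>?J. sm (lowering_coeff k) (b' k (b (k + 1) x)))) =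
        (\<Sum>k\<in>?J. sm (lowering_coeff k) (b' (j + 1) (b j (b' k (b (k + 1) x)))))"
      using b'_b_sum[where i = "j + 1" and q = j and A = ?J and g = lowering_coeff
          and y = "\<lambda>k. b' k (b (k + 1) x)"] index_bounds[of j] by simp
  qed
  have "lowering_op (M x) = (\<Sum>k\<in>?J. \<Sum>j\<in>?J. sm (lowering_coeff k) (b' k (b (k + 1) (b' (j + 1) (b j x)))))"
    unfolding Mop_def lowering_op_def
  proof (rule sum.cong[OF refl])
    fix k assume "k \<in> ?J"
    then show "sm (lowering_coeff k) (b' k (b (k + 1) (\<Sum>j\<in>?J. b' (j + 1) (b j x)))) =
        (\<Sum>j\<in>?J. sm (lowering_coeff k) (b' k (b (k + 1) (b' (j + 1) (b j x)))))"
      using b'_b_sum[where i = k and q = "k + 1" and A = ?J and g = "\<lambda>_. 1"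
          and y = "\<lambda>j. b' (j + 1) (b j x)"] index_bounds[of k] by (simp add: scale_sum_right)
  qed
  then have F_M: "lowering_op (M x) = (\<Sum>j\<in>?J. \<Sum>k\<in>?J. sm (lowering_coeff k) (b' k (b (k + 1) (b' (j + 1) (b j x)))))"
    by (subst sum.swap)
  have "M (lowering_op x) - lowering_op (M x) = (\<Sum>j\<in>?J. \<Sum>k\<in>?J. sm (lowering_coeff k)
      (b' (j + 1) (b j (b' k (b (k + 1) x))) - b' k (b (k + 1) (b' (j + 1) (b j x)))))"
    unfolding M_F F_M by (simp add: sum_subtractf scale_right_diff_distrib)
  also have "\<dots> = (\<Sum>j\<in>?J. \<Sum>k\<in>?J. if j = k then sm (lowering_coeff j) (number_op (j + 1) x - number_op j x) else 0)"
  proof (intro sum.cong refl)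
    fix j k assume j: "j \<in> ?J" and k: "k \<in> ?J"
    have "b' (j + 1) (b j (b' k (b (k + 1) x))) - b' k (b (k + 1) (b' (j + 1) (b j x)))
        = (if j = k then b' (j + 1) (b (k + 1) x) else 0) - (if j + 1 = k + 1 then b' k (b j x) else 0)"
      using b'_b_commutator[of "j + 1" j k "k + 1" x] index_bounds[OF j] index_bounds[OF k] by simp
    then show "sm (lowering_coeff k) (b' (j + 1) (b j (b' k (b (k + 1) x))) - b' k (b (k + 1) (b' (j + 1) (b j x))))
      = (if j = k then sm (lowering_coeff j) (number_op (j + 1) x - number_op j x) else 0)"
      unfolding number_op_def by auto
  qed
  finally show ?thesis by simp
qed

lemma lowering_coeff_diff:
  assumes "1 \<le> k" "k \<le> l"
  shows "lowering_coeff (k - 1) - lowering_coeff k = 2 * of_nat k - of_nat l - 1"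
proof -
  obtain k' where k': "k = Suc k'" using assms by (cases k) auto
  obtain t where t: "l = k + t" using assms by (metis le_add_diff_inverse)
  have "(k - 1) * (l - (k - 1)) = k' * (t + 1)" "k * (l - k) = (k' + 1) * t" using k' t by simp_all
  then have "lowering_coeff (k - 1) - lowering_coeff k = of_nat (k' * (t + 1)) - of_nat ((k' + 1) * t)"
    unfolding lowering_coeff_def by simp
  also have "\<dots> = 2 * of_nat k - of_nat l - 1" using k' t by (simp add: algebra_simps)
  finally show ?thesis .
qed

lemma sum_lowering_coeff_telescope:
  assumes "1 \<le> l"
  shows "(\<Sum>j=1..l-1. sm (lowering_coeff j) (h (j + 1) - h j)) = (\<Sum>k=1..l. sm (2 * of_nat k - of_nat l - 1) (h k))"
proof -
  have zero: "lowering_coeff 0 = 0" "lowering_coeff l = 0" unfolding lowering_coeff_def by simp_all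
  have shifted: "(\<Sum>j=1..l-1. sm (lowering_coeff j) (h (j + 1))) = (\<Sum>k=1..l. sm (lowering_coeff (k - 1)) (h k))"
  proof -
    have "(\<Sum>k=1..l. sm (lowering_coeff (k - 1)) (h k)) = (\<Sum>k=Suc 1..Suc (l - 1). sm (lowering_coeff (k - 1)) (h k))"
      using assms zero by (simp add: sum.atLeast_Suc_atMost)
    also have "\<dots> = (\<Sum>j=1..l-1. sm (lowering_coeff j) (h (Suc j)))"
      by (subst sum.shift_bounds_cl_Suc_ivl) simp
    finally show ?thesis by simp
  qed
  have unshifted: "(\<Sum>j=1..l-1. sm (lowering_coeff j) (h j)) = (\<Sum>k=1..l. sm (lowering_coeff k) (h k))"
    using assms zero by (cases l) simp_all
  have "(\<Sum>j=1..l-1. sm (lowering_coeff j) (h (j + 1) - h j)) =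
      (\<Sum>k=1..l. sm (lowering_coeff (k - 1)) (h k) - sm (lowering_coeff k) (h k))"
    unfolding scale_right_diff_distrib sum_subtractf shifted unshifted ..
  also have "\<dots> = (\<Sum>k=1..l. sm (2 * of_nat k - of_nat l - 1) (h k))"
    using lowering_coeff_diff by (intro sum.cong refl) (simp flip: scale_left_diff_distrib)
  finally show ?thesis .
qed

lemma Mop_lowering_op_commutator:
  assumes "1 \<le> l"
  shows "M (lowering_op x) - lowering_op (M x) = sm 2 (position_op x) - sm (of_nat l + 1) (numop l b b' x)"
proof -
  have "M (lowering_op x) - lowering_op (M x) = (\<Sum>k=1..l. sm (2 * of_nat k - of_nat l - 1) (number_op k x))"
    unfolding Mop_lowering_op_commutator_sum using sum_lowering_coeff_telescope[OF assms] by simp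
  also have "\<dots> = (\<Sum>k=1..l. sm 2 (sm (of_nat k) (number_op k x)) - sm (of_nat l + 1) (number_op k x))"
    by (rule sum.cong[OF refl]) (simp add: scale_left_diff_distrib algebra_simps)
  finally show ?thesis
    unfolding weighted_number_op_def numop_eq_weighted_number_op by (simp add: sum_subtractf scale_sum_right)
qed

definition position_eigenvalue :: "nat \<Rightarrow> int \<Rightarrow> complex" where
  "position_eigenvalue m r = of_int r + (of_nat m ^ 2 + of_nat m) / 2"

lemma W_iff_position_op:
  "x \<in> W m r \<longleftrightarrow> numop l b b' x = sm (of_nat m) x \<and> position_op x = sm (position_eigenvalue m r) x"
proof -
  interpret numop: Vector_Spaces.linear sm sm "numop l b b'" by (rule linear_numop)
  have Omega: "Omegaop sm l b b' x = position_op x - sm ((of_nat m ^ 2 + of_nat m) / 2) x"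
    if "numop l b b' x = sm (of_nat m) x"
  proof -
    have "numop l b b' (numop l b b' x) + numop l b b' x = sm (of_nat m ^ 2 + of_nat m) x"
      using that by (simp add: numop.scale scale_left_distrib power2_eq_square)
    then show ?thesis unfolding Omegaop_eq_position_op by simp
  qed
  show ?thesis
  proof
    assume x: "x \<in> W m r"
    then have N: "numop l b b' x = sm (of_nat m) x" unfolding Vsp_r_def by blast
    have "position_op x = Omegaop sm l b b' x + sm ((of_nat m ^ 2 + of_nat m) / 2) x"
      using Omega[OF N] by simp
    also have "\<dots> = sm (position_eigenvalue m r) x"
      using x unfolding Vsp_r_def position_eigenvalue_def by (simp add: scale_left_distrib)
    finally show "numop l b b' x = sm (of_nat m) x \<and> position_op x = sm (position_eigenvalue m r) x"
      using N by simp
  next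
    assume x: "numop l b b' x = sm (of_nat m) x \<and> position_op x = sm (position_eigenvalue m r) x"
    have "Omegaop sm l b b' x = sm (position_eigenvalue m r) x - sm ((of_nat m ^ 2 + of_nat m) / 2) x"
      using Omega x by simp
    also have "\<dots> = sm (of_int r) x"
      unfolding position_eigenvalue_def by (simp flip: scale_left_diff_distrib)
    finally show "x \<in> W m r" unfolding Vsp_r_def using x by simp
  qed
qed

lemma Mop_W:
  assumes "x \<in> W m r"
  shows "M x \<in> W m (r + 1)"
proof -
  interpret M: Vector_Spaces.linear sm sm M by (rule linear_Mop)
  have x: "numop l b b' x = sm (of_nat m) x" "position_op x = sm (position_eigenvalue m r) x"
    using assms W_iff_position_op by auto
  have "numop l b b' (M x) = sm (of_nat m) (M x)" unfolding numop_Mop x(1) M.scale ..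
  moreover have "position_op (M x) = sm (position_eigenvalue m (r + 1)) (M x)"
    unfolding position_op_Mop x(2) M.scale position_eigenvalue_def
    by (simp add: scale_left_distrib algebra_simps)
  ultimately show ?thesis using W_iff_position_op by simp
qed

lemma lowering_op_W:
  assumes "x \<in> W m r"
  shows "lowering_op x \<in> W m (r - 1)"
proof -
  interpret F: Vector_Spaces.linear sm sm lowering_op by (rule linear_lowering_op)
  have x: "numop l b b' x = sm (of_nat m) x" "position_op x = sm (position_eigenvalue m r) x"
    using assms W_iff_position_op by auto
  have "numop l b b' (lowering_op x) = sm (of_nat m) (lowering_op x)"
    unfolding numop_lowering_op x(1) F.scale ..
  moreover have "position_op (lowering_op x) = sm (position_eigenvalue m (r - 1)) (lowering_op x)"
    unfolding position_op_lowering_op x(2) F.scale position_eigenvalue_def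
    by (simp add: scale_left_diff_distrib algebra_simps)
  ultimately show ?thesis using W_iff_position_op by simp
qed

lemma commutator_W:
  assumes "1 \<le> l" "x \<in> W m r"
  shows "M (lowering_op x) - lowering_op (M x) = sm (of_int (2 * r - max_weight m)) x"
proof -
  have x: "numop l b b' x = sm (of_nat m) x" "position_op x = sm (position_eigenvalue m r) x"
    using assms(2) W_iff_position_op by auto
  have "M (lowering_op x) - lowering_op (M x) = sm (2 * position_eigenvalue m r - (of_nat l + 1) * of_nat m) x"
    unfolding Mop_lowering_op_commutator[OF assms(1)] x by (simp add: scale_left_diff_distrib)
  also have "2 * position_eigenvalue m r - (of_nat l + 1) * of_nat m = of_int (2 * r - max_weight m)"
    unfolding position_eigenvalue_def by (simp add: algebra_simps power2_eq_square)
  finally show ?thesis .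
qed

lemma sl2_weight_module_W:
  assumes "1 \<le> l"
  shows "sl2_weight_module sm states M lowering_op (W m) (max_weight m)"
  by (intro sl2_weight_module.intro sl2_weight_module_axioms.intro finite_dimensional_vector_space_axioms)
    (use linear_Mop linear_lowering_op subspace_W Mop_W lowering_op_W W_trivial commutator_W[OF assms]
      in simp_all)

section \<open>Kernels of the powers of M\<close>

lemma Mop_V: "x \<in> V m \<Longrightarrow> M x \<in> V m"
proof -
  interpret M: Vector_Spaces.linear sm sm M by (rule linear_Mop)
  show "x \<in> V m \<Longrightarrow> M x \<in> V m" unfolding Vsp_def by (simp add: numop_Mop M.scale)
qed

lemma restr_op_funpow: "x \<in> V m \<Longrightarrow> (restr_op (V m) M ^^ d) x = (M ^^ d) x"
proof (induction d)
  case (Suc d)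
  have "(M ^^ d) x \<in> V m" using Suc.prems by (induction d) (auto intro: Mop_V)
  then show ?case using Suc by (simp add: restr_op_def)
qed simp

context
  fixes m :: nat
  assumes l: "1 \<le> l"
begin

interpretation sl2: sl2_weight_module sm states M lowering_op "W m" "max_weight m"
  by (rule sl2_weight_module_W[OF l])

lemma ker_pow_eq_family_sum:
  "ker_pow (V m) M d = family_sum {0..max_weight m} (\<lambda>r. {x \<in> W m r. (M ^^ d) x = 0})"
proof (intro set_eqI iffI)
  interpret Md: Vector_Spaces.linear sm sm "M ^^ d" by (rule linear_funpow[OF linear_Mop])
  fix x assume "x \<in> ker_pow (V m) M d"
  then have x: "x \<in> V m" "(M ^^ d) x = 0" unfolding ker_pow_def using restr_op_funpow by auto
  let ?u = "\<lambda>r. weight_component m r x"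
  have "(\<Sum>r\<in>{0..max_weight m}. (M ^^ d) (?u r)) = (M ^^ d) x"
    unfolding Md.sum[symmetric] sum_weight_components[OF x(1)] ..
  then have sum_0: "(\<Sum>r\<in>{0..max_weight m}. (M ^^ d) (?u r)) = 0" using x(2) by simp
  have "\<forall>r\<in>{0..max_weight m}. (M ^^ d) (?u r) \<in> W m (r + int d)"
    using sl2.e_pow_W weight_component_W by blast
  then have "\<forall>r\<in>{0..max_weight m}. (M ^^ d) (?u r) = 0"
    by (intro W_independent[OF _ _ _ sum_0]) (simp_all add: inj_on_def)
  then show "x \<in> family_sum {0..max_weight m} (\<lambda>r. {x \<in> W m r. (M ^^ d) x = 0})"
    unfolding family_sum_def using sum_weight_components[OF x(1)] weight_component_W
    by (intro CollectI exI[of _ ?u]) auto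
next
  interpret Md: Vector_Spaces.linear sm sm "M ^^ d" by (rule linear_funpow[OF linear_Mop])
  fix x assume "x \<in> family_sum {0..max_weight m} (\<lambda>r. {x \<in> W m r. (M ^^ d) x = 0})"
  then obtain u where u: "x = (\<Sum>r\<in>{0..max_weight m}. u r)"
    "\<forall>r\<in>{0..max_weight m}. u r \<in> W m r \<and> (M ^^ d) (u r) = 0"
    unfolding family_sum_def by blast
  have "x \<in> V m" unfolding u(1) using u(2) W_subset_V by (intro subspace_sum[OF subspace_V]) blast
  moreover have "(M ^^ d) x = 0" unfolding u(1) Md.sum using u(2) by simp
  ultimately show "x \<in> ker_pow (V m) M d" unfolding ker_pow_def using restr_op_funpow by simp
qed

lemma dim_ker_pow:
  "int (dim (ker_pow (V m) M d)) = window_sum (\<lambda>r. int (dim (W m r))) (max_weight m) (int d)"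
proof -
  interpret Md: Vector_Spaces.linear sm sm "M ^^ d" by (rule linear_funpow[OF linear_Mop])
  let ?I = "{0..max_weight m}"
  have "dim (ker_pow (V m) M d) = (\<Sum>r\<in>?I. dim {x \<in> W m r. (M ^^ d) x = 0})"
    unfolding ker_pow_eq_family_sum
  proof (rule dim_family_sum)
    show "\<forall>r\<in>?I. subspace {x \<in> W m r. (M ^^ d) x = 0}"
      using subspace_inter[OF subspace_W Md.subspace_kernel] by (simp add: Int_def)
    fix u assume u: "\<forall>r\<in>?I. u r \<in> {x \<in> W m r. (M ^^ d) x = 0}" "sum u ?I = 0"
    then have "\<forall>r\<in>?I. u r \<in> W m (id r)" by simp
    then show "\<forall>r\<in>?I. u r = 0" by (intro W_independent[OF _ _ _ u(2)]) simp_all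
  qed simp
  then have "int (dim (ker_pow (V m) M d)) = (\<Sum>r\<in>?I. int (dim {x \<in> W m r. (M ^^ d) x = 0}))"
    by simp
  also have "\<dots> = (\<Sum>r\<in>?I. if max_weight m < 2 * r + int d
      then int (dim (W m r)) - int (dim (W m (r + int d))) else 0)"
    unfolding sl2.dim_kernel_e_pow_W ..
  also have "\<dots> = window_sum (\<lambda>r. int (dim (W m r))) (max_weight m) (int d)"
    using W_trivial by (intro sum_differences_eq_window_sum) simp_all
  finally show ?thesis .
qed

lemma dim_ker_pow_diff:
  assumes "1 \<le> d"
  shows "int (dim (ker_pow (V m) M d)) - int (dim (ker_pow (V m) M (d - 1))) =
    int (dim (W m ((max_weight m - (int d - 1)) div 2)))"
proof -
  have "int (d - 1) = int d - 1" using assms by simp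
  moreover have "window_sum (\<lambda>r. int (dim (W m r))) (max_weight m) (int d)
      - window_sum (\<lambda>r. int (dim (W m r))) (max_weight m) (int d - 1)
      = int (dim (W m ((max_weight m - (int d - 1)) div 2)))"
    using W_trivial sl2.dim_W_reflect assms by (intro window_sum_diff) simp_all
  ultimately show ?thesis unfolding dim_ker_pow by simp
qed

end

end

theorem theorem2:
  fixes sm :: "complex \<Rightarrow> 'v::ab_group_add \<Rightarrow> 'v"
    and b b' :: "nat \<Rightarrow> 'v \<Rightarrow> 'v" and right :: 'v
    and l m d :: nat
  assumes "fermion_system sm l b b' right"
    and "l \<ge> 1" and "m \<le> l" and "d \<ge> 1"
  shows "int (vector_space.dim sm (ker_pow (Vsp sm l b b' m) (Mop l b b') d))
       - int (vector_space.dim sm (ker_pow (Vsp sm l b b' m) (Mop l b b') (d - 1)))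
       = int (vector_space.dim sm
           (Vsp_r sm l b b' m ((int m * (int l - int m) - (int d - 1)) div 2)))"
proof -
  interpret fermionic_fock_space sm l b b' right by (rule fermionic_fock_space.intro) fact
  show ?thesis by (rule dim_ker_pow_diff[OF assms(2) assms(4)])
qed

end
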